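(* Let $T$ be a tree rooted at $r$ with vertex set $V$. Let $V_1,V_2\subseteq V$ with $V_1\cap V_2=\emptyset$ and $|V_1|=|V_2|$, such that $V_1$ (resp. $V_2$) induces in $T$ a collection $\mathcal{P}_1$ (resp. $\mathcal{P}_2$) of vertex-disjoint paths, and suppose there is a bijection $\mathcal{P}_1\to\mathcal{P}_2$ mapping each path that starts at a vertex $v$ to a path of the same length that starts at a sibling of $v$. If every two distinct paths in $\mathcal{P}_1\cup\mathcal{P}_2$ are independent, then $V_1$ and $V_2$ are homometric sets of $T$.
   Context: Here a path in $\mathcal{P}_1\cup\mathcal{P}_2$ "starts at" the vertex of the path closest to the root (each such path runs downward from that vertex toward the leaves), and siblings are distinct vertices with the same parent. Two paths $P_1,P_2$ in $T$ are independent if there is no root-to-leaf path in $T$ that shares a vertex with both $P_1$ and $P_2$. The profile of a vertex set $V'$ is the multiset of distances in $T$ over all unordered pairs of distinct vertices of $V'$; two disjoint vertex sets are homometric if their profiles are equal. *)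

theory Defs
  imports Main "HOL-Library.Multiset"
begin

definition rooted_tree :: "'a set \<Rightarrow> 'a \<Rightarrow> ('a \<Rightarrow> 'a) \<Rightarrow> bool" where
  "rooted_tree V r par \<longleftrightarrow> finite V \<and> r \<in> V \<and>
     (\<forall>v\<in>V - {r}. par v \<in> V) \<and> (\<forall>v\<in>V. \<exists>n. (par ^^ n) v = r)"

definition tree_edge :: "'a set \<Rightarrow> 'a \<Rightarrow> ('a \<Rightarrow> 'a) \<Rightarrow> 'a \<Rightarrow> 'a \<Rightarrow> bool" where
  "tree_edge V r par u v \<longleftrightarrow> u \<in> V \<and> v \<in> V \<and>
     ((u \<noteq> r \<and> par u = v) \<or> (v \<noteq> r \<and> par v = u))"

definition is_walk :: "'a set \<Rightarrow> 'a \<Rightarrow> ('a \<Rightarrow> 'a) \<Rightarrow> 'a list \<Rightarrow> bool" where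
  "is_walk V r par xs \<longleftrightarrow> xs \<noteq> [] \<and> set xs \<subseteq> V \<and>
     (\<forall>i. Suc i < length xs \<longrightarrow> tree_edge V r par (xs ! i) (xs ! Suc i))"

definition tdist :: "'a set \<Rightarrow> 'a \<Rightarrow> ('a \<Rightarrow> 'a) \<Rightarrow> 'a \<Rightarrow> 'a \<Rightarrow> nat" where
  "tdist V r par u v = (LEAST k. \<exists>xs. is_walk V r par xs \<and> hd xs = u \<and> last xs = v
                                        \<and> length xs = Suc k)"

definition pair_dist :: "'a set \<Rightarrow> 'a \<Rightarrow> ('a \<Rightarrow> 'a) \<Rightarrow> 'a set \<Rightarrow> nat" where
  "pair_dist V r par e = (THE d. \<exists>u v. e = {u, v} \<and> u \<noteq> v \<and> d = tdist V r par u v)"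

definition profile :: "'a set \<Rightarrow> 'a \<Rightarrow> ('a \<Rightarrow> 'a) \<Rightarrow> 'a set \<Rightarrow> nat multiset" where
  "profile V r par S = image_mset (pair_dist V r par) (mset_set {e. e \<subseteq> S \<and> card e = 2})"

definition homometric :: "'a set \<Rightarrow> 'a \<Rightarrow> ('a \<Rightarrow> 'a) \<Rightarrow> 'a set \<Rightarrow> 'a set \<Rightarrow> bool" where
  "homometric V r par S1 S2 \<longleftrightarrow> S1 \<inter> S2 = {} \<and> profile V r par S1 = profile V r par S2"

definition down_path :: "'a set \<Rightarrow> 'a \<Rightarrow> ('a \<Rightarrow> 'a) \<Rightarrow> 'a list \<Rightarrow> bool" where
  "down_path V r par xs \<longleftrightarrow> xs \<noteq> [] \<and> set xs \<subseteq> V \<and> distinct xs \<and>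
     (\<forall>i. Suc i < length xs \<longrightarrow> xs ! Suc i \<noteq> r \<and> par (xs ! Suc i) = xs ! i)"

definition is_leaf :: "'a set \<Rightarrow> 'a \<Rightarrow> ('a \<Rightarrow> 'a) \<Rightarrow> 'a \<Rightarrow> bool" where
  "is_leaf V r par v \<longleftrightarrow> v \<in> V \<and> \<not> (\<exists>w\<in>V. w \<noteq> r \<and> par w = v)"

definition root_leaf_path :: "'a set \<Rightarrow> 'a \<Rightarrow> ('a \<Rightarrow> 'a) \<Rightarrow> 'a list \<Rightarrow> bool" where
  "root_leaf_path V r par xs \<longleftrightarrow> down_path V r par xs \<and> hd xs = r \<and> is_leaf V r par (last xs)"

definition independent :: "'a set \<Rightarrow> 'a \<Rightarrow> ('a \<Rightarrow> 'a) \<Rightarrow> 'a list \<Rightarrow> 'a list \<Rightarrow> bool" where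
  "independent V r par p q \<longleftrightarrow>
     \<not> (\<exists>\<rho>. root_leaf_path V r par \<rho> \<and> set \<rho> \<inter> set p \<noteq> {} \<and> set \<rho> \<inter> set q \<noteq> {})"

text \<open>S induces in T the collection P of vertex-disjoint (downward) paths:
P is exactly the set of connected components of T[S], each being a path.\<close>
definition induces_paths :: "'a set \<Rightarrow> 'a \<Rightarrow> ('a \<Rightarrow> 'a) \<Rightarrow> 'a set \<Rightarrow> 'a list set \<Rightarrow> bool" where
  "induces_paths V r par S P \<longleftrightarrow>
     (\<forall>p\<in>P. down_path V r par p) \<and> \<Union>(set ` P) = S \<and>
     (\<forall>p\<in>P. \<forall>q\<in>P. p \<noteq> q \<longrightarrow> set p \<inter> set q = {}) \<and>
     (\<forall>p\<in>P. \<forall>q\<in>P. p \<noteq> q \<longrightarrow> (\<forall>u\<in>set p. \<forall>v\<in>set q. \<not> tree_edge V r par u v))"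

definition siblings :: "'a set \<Rightarrow> 'a \<Rightarrow> ('a \<Rightarrow> 'a) \<Rightarrow> 'a \<Rightarrow> 'a \<Rightarrow> bool" where
  "siblings V r par u v \<longleftrightarrow> u \<in> V \<and> v \<in> V \<and> u \<noteq> v \<and> u \<noteq> r \<and> v \<noteq> r \<and> par u = par v"

end

theory Submission
  imports Defs
begin

text \<open>
  Index the vertices of \<open>V1\<close> by positions: the \<open>i\<close>-th vertex of a path \<open>p \<in> P1\<close> is sent to the
  \<open>i\<close>-th vertex of \<open>f p\<close>. Within one downward path the distance between positions \<open>i\<close> and \<open>j\<close>
  is \<open>|i - j|\<close>. If two paths \<open>p, q\<close> are independent, no vertex of one is an ancestor of a vertex
  of the other, so a shortest route from \<open>p ! i\<close> to \<open>q ! j\<close> climbs through both heads and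
  their parents: its length is \<open>i + j + 2 + d(par (hd p), par (hd q))\<close>. Sibling heads have the
  same parent, so the vertex map is an isometry from \<open>V1\<close> onto \<open>V2\<close> and therefore preserves
  the profile.
\<close>

lemma tree_edge_commute: "tree_edge V r par u v \<longleftrightarrow> tree_edge V r par v u"
  unfolding tree_edge_def by auto

lemma is_walk_singleton [simp]: "is_walk V r par [v] \<longleftrightarrow> v \<in> V"
  by (simp add: is_walk_def)

lemma is_walk_Cons_Cons:
  "is_walk V r par (u # v # vs) \<longleftrightarrow> tree_edge V r par u v \<and> is_walk V r par (v # vs)"
  unfolding is_walk_def by (auto simp: All_less_Suc2 tree_edge_def)

lemma is_walk_append:
  assumes "is_walk V r par xs" "is_walk V r par ys" "last xs = hd ys"
  shows "is_walk V r par (xs @ tl ys)"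
  using assms
proof (induction xs rule: induct_list012)
  case (2 x)
  then show ?case by (cases ys) auto
next
  case (3 x y zs)
  then show ?case by (simp add: is_walk_Cons_Cons)
qed (simp add: is_walk_def)

lemma is_walk_rev: "is_walk V r par xs \<Longrightarrow> is_walk V r par (rev xs)"
proof (induction xs rule: induct_list012)
  case (3 x y zs)
  then have "is_walk V r par (rev (y # zs))" "is_walk V r par [y, x]"
    by (auto simp: is_walk_Cons_Cons tree_edge_commute[of V r par y x] tree_edge_def)
  then have "is_walk V r par (rev (y # zs) @ tl [y, x])"
    by (rule is_walk_append) simp
  then show ?case by simp
qed (simp_all add: is_walk_def)

lemma tdist_commute: "tdist V r par u v = tdist V r par v u"
proof -
  have reverse: "\<exists>xs. is_walk V r par xs \<and> hd xs = u \<and> last xs = v \<and> length xs = Suc k"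
    if "is_walk V r par xs" "hd xs = v" "last xs = u" "length xs = Suc k" for u v k xs
    using that is_walk_rev[OF that(1)] by (intro exI[of _ "rev xs"]) (auto simp: hd_rev last_rev is_walk_def)
  have "(\<lambda>k. \<exists>xs. is_walk V r par xs \<and> hd xs = u \<and> last xs = v \<and> length xs = Suc k)
      = (\<lambda>k. \<exists>xs. is_walk V r par xs \<and> hd xs = v \<and> last xs = u \<and> length xs = Suc k)"
    by (intro ext iffI) (elim exE conjE reverse; assumption)+
  then show ?thesis
    unfolding tdist_def by simp
qed

lemma tdist_le:
  "is_walk V r par xs \<Longrightarrow> length xs = Suc k \<Longrightarrow> tdist V r par (hd xs) (last xs) \<le> k"
  unfolding tdist_def by (rule Least_le) blast

lemma tdist_self: "v \<in> V \<Longrightarrow> tdist V r par v v = 0"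
  using tdist_le[of V r par "[v]" 0] by simp

lemma down_path_is_walk: "down_path V r par xs \<Longrightarrow> is_walk V r par xs"
  unfolding down_path_def is_walk_def tree_edge_def by (auto dest: nth_mem)

lemma down_path_nth_in_V: "down_path V r par xs \<Longrightarrow> i < length xs \<Longrightarrow> xs ! i \<in> V"
  unfolding down_path_def by (auto dest: nth_mem)

lemma down_path_step:
  "down_path V r par xs \<Longrightarrow> Suc i < length xs \<Longrightarrow> xs ! Suc i \<noteq> r \<and> par (xs ! Suc i) = xs ! i"
  unfolding down_path_def by blast

lemma down_path_snoc:
  assumes "down_path V r par xs" "v \<in> V" "v \<notin> set xs" "v \<noteq> r" "par v = last xs"
  shows "down_path V r par (xs @ [v])"
  using assms unfolding down_path_def
  by (auto simp: nth_append less_Suc_eq) (metis diff_Suc_1 last_conv_nth)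

lemma induces_pathsD:
  assumes "induces_paths V r par S P"
  shows "\<And>p. p \<in> P \<Longrightarrow> down_path V r par p" "\<And>p. p \<in> P \<Longrightarrow> distinct p"
    "\<And>p q. p \<in> P \<Longrightarrow> q \<in> P \<Longrightarrow> p \<noteq> q \<Longrightarrow> set p \<inter> set q = {}" "\<Union>(set ` P) = S"
proof -
  show "\<And>p. p \<in> P \<Longrightarrow> down_path V r par p"
    using assms by (simp add: induces_paths_def)
  then show "\<And>p. p \<in> P \<Longrightarrow> distinct p"
    by (simp add: down_path_def)
  show "\<And>p q. p \<in> P \<Longrightarrow> q \<in> P \<Longrightarrow> p \<noteq> q \<Longrightarrow> set p \<inter> set q = {}" "\<Union>(set ` P) = S"
    using assms by (simp_all add: induces_paths_def)
qed

lemma pair_dist_doubleton: "u \<noteq> v \<Longrightarrow> pair_dist V r par {u, v} = tdist V r par u v"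
  unfolding pair_dist_def
  by (rule the_equality) (auto simp: doubleton_eq_iff tdist_commute)

lemma profile_eq_if_isometry:
  assumes g: "bij_betw g S1 S2"
    and iso: "\<And>u v. u \<in> S1 \<Longrightarrow> v \<in> S1 \<Longrightarrow> tdist V r par (g u) (g v) = tdist V r par u v"
  shows "profile V r par S2 = profile V r par S1"
proof -
  define E1 where "E1 = {e. e \<subseteq> S1 \<and> card e = 2}"
  have inj: "inj_on g S1" and im: "g ` S1 = S2" using g by (auto simp: bij_betw_def)
  have inj_E1: "inj_on ((`) g) E1"
    using inj_on_image_Pow[OF inj] unfolding E1_def by (rule inj_on_subset) auto
  have E2: "{e. e \<subseteq> S2 \<and> card e = 2} = (`) g ` E1"
  proof (intro equalityI subsetI)
    fix e assume "e \<in> (`) g ` E1"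
    then show "e \<in> {e. e \<subseteq> S2 \<and> card e = 2}"
      unfolding E1_def using im card_image[OF inj_on_subset[OF inj]] by auto
  next
    fix e assume e: "e \<in> {e. e \<subseteq> S2 \<and> card e = 2}"
    define e' where "e' = S1 \<inter> g -` e"
    have "e' \<subseteq> S1" "g ` e' = e" using e im unfolding e'_def by auto
    moreover from this have "card e' = card e" using card_image[OF inj_on_subset[OF inj]] by metis
    ultimately show "e \<in> (`) g ` E1" using e unfolding E1_def by auto
  qed
  have dist: "pair_dist V r par (g ` e) = pair_dist V r par e" if "e \<in> E1" for e
  proof -
    have "e \<subseteq> S1" "card e = 2" using that unfolding E1_def by auto
    then obtain u v where "e = {u, v}" "u \<noteq> v" "u \<in> S1" "v \<in> S1"
      by (metis card_2_iff insert_subset)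
    moreover have "g u \<noteq> g v" using inj_onD[OF inj] calculation by metis
    ultimately show ?thesis using iso by (simp add: pair_dist_doubleton)
  qed
  have "profile V r par S2 = image_mset (pair_dist V r par) (image_mset ((`) g) (mset_set E1))"
    unfolding profile_def E2 image_mset_mset_set[OF inj_E1] ..
  also have "\<dots> = image_mset (pair_dist V r par) (mset_set E1)"
    unfolding multiset.map_comp comp_def by (rule image_mset_cong) (cases "finite E1", simp_all add: dist)
  finally show ?thesis unfolding profile_def E1_def .
qed

lemma bij_betw_nth_Sigma:
  assumes "\<And>p. p \<in> P \<Longrightarrow> distinct p"
    and "\<And>p q. p \<in> P \<Longrightarrow> q \<in> P \<Longrightarrow> p \<noteq> q \<Longrightarrow> set p \<inter> set q = {}"
  shows "bij_betw (\<lambda>(p, i). p ! i) (SIGMA p:P. {..<length p}) (\<Union>(set ` P))"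
proof -
  have "p = q \<and> i = j"
    if "p \<in> P" "i < length p" "q \<in> P" "j < length q" "p ! i = q ! j" for p i q j
  proof -
    have "p = q" using assms(2)[of p q] that by (metis disjoint_iff nth_mem)
    then show ?thesis using assms(1) that nth_eq_iff_index_eq by metis
  qed
  then have "inj_on (\<lambda>(p, i). p ! i) (SIGMA p:P. {..<length p})"
    by (auto intro!: inj_onI)
  moreover have "(\<lambda>(p, i). p ! i) ` (SIGMA p:P. {..<length p}) = \<Union>(set ` P)"
    by (fastforce simp: in_set_conv_nth)
  ultimately show ?thesis by (simp add: bij_betw_def)
qed

lemma bij_betw_Sigma_length:
  assumes "bij_betw f P Q" "\<And>p. p \<in> P \<Longrightarrow> length (f p) = length p"
  shows "bij_betw (\<lambda>(p, i). (f p, i)) (SIGMA p:P. {..<length p}) (SIGMA q:Q. {..<length q})"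
  using assms unfolding bij_betw_def inj_on_def by (auto simp: image_iff)

lemma profile_eq_if_path_isometry:
  assumes P: "\<And>p. p \<in> P \<Longrightarrow> distinct p"
      "\<And>p p'. p \<in> P \<Longrightarrow> p' \<in> P \<Longrightarrow> p \<noteq> p' \<Longrightarrow> set p \<inter> set p' = {}"
    and Q: "\<And>q. q \<in> Q \<Longrightarrow> distinct q"
      "\<And>q q'. q \<in> Q \<Longrightarrow> q' \<in> Q \<Longrightarrow> q \<noteq> q' \<Longrightarrow> set q \<inter> set q' = {}"
    and f: "bij_betw f P Q" "\<And>p. p \<in> P \<Longrightarrow> length (f p) = length p"
    and iso: "\<And>p p' i i'. p \<in> P \<Longrightarrow> p' \<in> P \<Longrightarrow> i < length p \<Longrightarrow> i' < length p' \<Longrightarrow>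
      tdist V r par (f p ! i) (f p' ! i') = tdist V r par (p ! i) (p' ! i')"
  shows "profile V r par (\<Union>(set ` Q)) = profile V r par (\<Union>(set ` P))"
proof -
  define pos where "pos = (SIGMA p:P. {..<length p})"
  let ?vertex = "\<lambda>(p, i). p ! i" and ?shift = "\<lambda>(p, i). (f p, i)"
  have vertex_P: "bij_betw ?vertex pos (\<Union>(set ` P))"
    unfolding pos_def using P by (rule bij_betw_nth_Sigma)
  have "bij_betw (?vertex \<circ> ?shift) pos (\<Union>(set ` Q))"
    unfolding pos_def using bij_betw_Sigma_length[OF f] bij_betw_nth_Sigma[OF Q] by (rule bij_betw_trans)
  then have "bij_betw (?vertex \<circ> ?shift \<circ> inv_into pos ?vertex) (\<Union>(set ` P)) (\<Union>(set ` Q))"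
    using bij_betw_inv_into[OF vertex_P] by (rule bij_betw_trans[rotated])
  moreover have "tdist V r par ((?vertex \<circ> ?shift \<circ> inv_into pos ?vertex) u)
      ((?vertex \<circ> ?shift \<circ> inv_into pos ?vertex) v) = tdist V r par u v"
    if u: "u \<in> \<Union>(set ` P)" and v: "v \<in> \<Union>(set ` P)" for u v
  proof -
    obtain p i where pi: "inv_into pos ?vertex u = (p, i)" "(p, i) \<in> pos" "p ! i = u"
      using bij_betw_inv_into_right[OF vertex_P u] bij_betw_apply[OF bij_betw_inv_into[OF vertex_P] u]
      by (metis case_prod_conv surj_pair)
    obtain p' i' where pi': "inv_into pos ?vertex v = (p', i')" "(p', i') \<in> pos" "p' ! i' = v"
      using bij_betw_inv_into_right[OF vertex_P v] bij_betw_apply[OF bij_betw_inv_into[OF vertex_P] v]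
      by (metis case_prod_conv surj_pair)
    show ?thesis using pi pi' iso unfolding pos_def by auto
  qed
  ultimately show ?thesis by (rule profile_eq_if_isometry)
qed

definition depth :: "'a \<Rightarrow> ('a \<Rightarrow> 'a) \<Rightarrow> 'a \<Rightarrow> nat" where
  "depth r par v = (LEAST n. (par ^^ n) v = r)"

inductive ancestor :: "'a set \<Rightarrow> 'a \<Rightarrow> ('a \<Rightarrow> 'a) \<Rightarrow> 'a \<Rightarrow> 'a \<Rightarrow> bool"
  for V r par where
  self: "v \<in> V \<Longrightarrow> ancestor V r par v v"
| parent: "ancestor V r par u (par v) \<Longrightarrow> v \<in> V \<Longrightarrow> v \<noteq> r \<Longrightarrow> ancestor V r par u v"

locale rtree =
  fixes V :: "'a set" and r :: 'a and par :: "'a \<Rightarrow> 'a"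
  assumes rooted_tree: "rooted_tree V r par"
begin

lemma finite_V: "finite V" and root_in_V: "r \<in> V"
  and par_in_V: "v \<in> V \<Longrightarrow> v \<noteq> r \<Longrightarrow> par v \<in> V"
  and reaches_root: "v \<in> V \<Longrightarrow> \<exists>n. (par ^^ n) v = r"
  using rooted_tree unfolding rooted_tree_def by auto

lemma depth_root [simp]: "depth r par r = 0"
  unfolding depth_def by (rule Least_eq_0) simp

lemma depth_par:
  assumes "v \<in> V" "v \<noteq> r"
  shows "depth r par v = Suc (depth r par (par v))"
proof -
  obtain n where "(par ^^ n) v = r" using reaches_root assms(1) by blast
  then show ?thesis
    unfolding depth_def using assms(2)
    by (subst Least_Suc) (auto simp: funpow_Suc_right simp del: funpow.simps)
qed

lemma ancestor_in_V: "ancestor V r par u v \<Longrightarrow> u \<in> V \<and> v \<in> V"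
  by (induction rule: ancestor.induct) auto

lemma ancestor_depth_less: "ancestor V r par u v \<Longrightarrow> u = v \<or> depth r par u < depth r par v"
  by (induction rule: ancestor.induct) (auto simp: depth_par)

lemma ancestor_trans: "ancestor V r par v w \<Longrightarrow> ancestor V r par u v \<Longrightarrow> ancestor V r par u w"
  by (induction rule: ancestor.induct) (auto intro: ancestor.parent)

lemma ancestor_root_iff: "ancestor V r par u r \<longleftrightarrow> u = r"
  using root_in_V by (auto elim: ancestor.cases intro: ancestor.self)

lemma ancestor_par_iff:
  "v \<in> V \<Longrightarrow> v \<noteq> r \<Longrightarrow> ancestor V r par u v \<longleftrightarrow> u = v \<or> ancestor V r par u (par v)"
  by (auto elim: ancestor.cases intro: ancestor.intros)

lemma root_path:
  "v \<in> V \<Longrightarrow> \<exists>xs. down_path V r par xs \<and> hd xs = r \<and> last xs = v \<and> set xs = {u. ancestor V r par u v}"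
proof (induction "depth r par v" arbitrary: v)
  case 0
  have "v = r"
  proof (rule ccontr)
    assume "v \<noteq> r"
    then show False using depth_par[OF "0.prems"] "0.hyps" by simp
  qed
  then show ?case
    using root_in_V by (intro exI[of _ "[r]"]) (auto simp: down_path_def ancestor_root_iff)
next
  case (Suc n)
  have v: "v \<noteq> r"
  proof
    assume "v = r"
    then show False using Suc.hyps(2) by simp
  qed
  have depth_v: "depth r par v = Suc (depth r par (par v))" using depth_par[OF Suc.prems v] .
  have "n = depth r par (par v)" using Suc.hyps(2) depth_v by simp
  then obtain xs where xs: "down_path V r par xs" "hd xs = r" "last xs = par v"
    "set xs = {u. ancestor V r par u (par v)}"
    using Suc.hyps(1) par_in_V[OF Suc.prems v] by blast
  have "v \<notin> set xs"
  proof
    assume "v \<in> set xs"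
    then have "v = par v \<or> depth r par v < depth r par (par v)"
      using xs(4) by (intro ancestor_depth_less) simp
    then show False using depth_v by (metis n_not_Suc_n not_less_eq less_Suc_eq)
  qed
  then have "down_path V r par (xs @ [v])"
    using down_path_snoc[OF xs(1) Suc.prems _ v] xs(3) by simp
  moreover have "set (xs @ [v]) = {u. ancestor V r par u v}"
    using xs(4) ancestor_par_iff[OF Suc.prems v] by auto
  ultimately show ?case
    using xs(1,2) by (intro exI[of _ "xs @ [v]"]) (auto simp: down_path_def)
qed

lemma walk_exists:
  assumes "u \<in> V" "v \<in> V"
  shows "\<exists>xs. is_walk V r par xs \<and> hd xs = u \<and> last xs = v"
proof -
  obtain xs ys where xs: "down_path V r par xs" "hd xs = r" "last xs = u"
    and ys: "down_path V r par ys" "hd ys = r" "last ys = v"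
    using root_path assms by meson
  have ne: "xs \<noteq> []" "ys \<noteq> []" using xs ys by (auto simp: down_path_def)
  have "is_walk V r par (rev xs @ tl ys)"
    using xs ys ne by (intro is_walk_append is_walk_rev down_path_is_walk) (auto simp: last_rev)
  moreover have "hd (rev xs @ tl ys) = u" using xs ne by (simp add: hd_rev)
  moreover have "last (rev xs @ tl ys) = v"
    using xs ys ne by (cases ys) (auto simp: last_rev)
  ultimately show ?thesis by blast
qed

lemma shortest_walk:
  assumes "u \<in> V" "v \<in> V"
  obtains xs where "is_walk V r par xs" "hd xs = u" "last xs = v" "length xs = Suc (tdist V r par u v)"
proof -
  obtain xs where "is_walk V r par xs" "hd xs = u" "last xs = v"
    using walk_exists assms by blast
  then have "\<exists>k xs. is_walk V r par xs \<and> hd xs = u \<and> last xs = v \<and> length xs = Suc k"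
    by (metis is_walk_def length_greater_0_conv Suc_pred)
  then have "\<exists>xs. is_walk V r par xs \<and> hd xs = u \<and> last xs = v \<and> length xs = Suc (tdist V r par u v)"
    unfolding tdist_def by (rule LeastI_ex)
  then show ?thesis using that by blast
qed

lemma walk_leaving_subtree:
  assumes "is_walk V r par xs" "ancestor V r par x (hd xs)" "\<not> ancestor V r par x (last xs)"
  shows "\<exists>ys. is_walk V r par ys \<and> hd ys = par x \<and> last ys = last xs \<and> length ys < length xs"
  using assms
proof (induction xs rule: induct_list012)
  case (3 a b zs)
  then have edge: "tree_edge V r par a b" and walk: "is_walk V r par (b # zs)"
    by (simp_all add: is_walk_Cons_Cons)
  show ?case
  proof (cases "ancestor V r par x b")
    case True
    then show ?thesis using 3 walk by fastforce
  next
    case False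
    have "a \<noteq> r \<and> par a = b"
    proof (rule ccontr)
      assume "\<not> (a \<noteq> r \<and> par a = b)"
      then have "b \<in> V" "b \<noteq> r" "par b = a" using edge unfolding tree_edge_def by auto
      then have "ancestor V r par x b"
        using ancestor.parent[of V r par x b] "3.prems"(2) by simp
      then show False using False by contradiction
    qed
    moreover have "a \<in> V" using edge by (simp add: tree_edge_def)
    ultimately have "a = x \<and> b = par x"
      using ancestor_par_iff "3.prems"(2) False by auto
    then show ?thesis using walk by (intro exI[of _ "b # zs"]) simp
  qed
qed (simp_all add: is_walk_def)

lemma tdist_par:
  assumes "x \<in> V" "x \<noteq> r" "y \<in> V" "\<not> ancestor V r par x y"
  shows "tdist V r par x y = Suc (tdist V r par (par x) y)"
proof (rule antisym)
  obtain ys where ys: "is_walk V r par ys" "hd ys = par x" "last ys = y"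
    "length ys = Suc (tdist V r par (par x) y)"
    by (rule shortest_walk[OF par_in_V[OF assms(1,2)] assms(3)])
  then obtain zs where zs: "ys = par x # zs" by (cases ys) (auto simp: is_walk_def)
  have "is_walk V r par (x # ys)"
    using ys(1) assms par_in_V unfolding zs by (simp add: is_walk_Cons_Cons tree_edge_def)
  then show "tdist V r par x y \<le> Suc (tdist V r par (par x) y)"
    using tdist_le[of V r par "x # ys"] ys zs by simp
next
  obtain xs where xs: "is_walk V r par xs" "hd xs = x" "last xs = y"
    "length xs = Suc (tdist V r par x y)"
    by (rule shortest_walk[OF assms(1,3)])
  moreover have "ancestor V r par x (hd xs)" using xs(2) ancestor.self[of x V r par] assms(1) by simp
  ultimately obtain ys where "is_walk V r par ys" "hd ys = par x" "last ys = y" "length ys < length xs"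
    using walk_leaving_subtree assms(4) by metis
  then show "Suc (tdist V r par (par x) y) \<le> tdist V r par x y"
    using tdist_le[of V r par ys "length ys - 1"] xs by (cases ys) (auto simp: is_walk_def)
qed

lemma leaf_below:
  assumes "v \<in> V"
  obtains w where "is_leaf V r par w" "ancestor V r par v w"
proof -
  define D where "D = {w. ancestor V r par v w}"
  have "D \<subseteq> V" unfolding D_def using ancestor_in_V by blast
  then have fin: "finite (depth r par ` D)" using finite_V by (simp add: finite_subset)
  have "v \<in> D" unfolding D_def using ancestor.self[OF assms] by simp
  then have "Max (depth r par ` D) \<in> depth r par ` D" using fin by (intro Max_in) auto
  then obtain w where w: "w \<in> D" "depth r par w = Max (depth r par ` D)" by (metis imageE)
  have "is_leaf V r par w"
    unfolding is_leaf_def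
  proof safe
    show "w \<in> V" using w(1) \<open>D \<subseteq> V\<close> by blast
    fix c assume c: "c \<in> V" "c \<noteq> r" "w = par c"
    then have "c \<in> D" using w(1) ancestor.parent[of V r par v c] unfolding D_def by simp
    then have "depth r par c \<le> depth r par w" using Max_ge[OF fin] w(2) by simp
    then show False using depth_par[OF c(1,2)] c(3) by simp
  qed
  then show ?thesis using that w(1) unfolding D_def by blast
qed

lemma root_leaf_path_through:
  assumes "ancestor V r par u v"
  obtains \<rho> where "root_leaf_path V r par \<rho>" "u \<in> set \<rho>" "v \<in> set \<rho>"
proof -
  have "v \<in> V" using ancestor_in_V[OF assms] by simp
  then obtain w where w: "is_leaf V r par w" "ancestor V r par v w" by (rule leaf_below)
  then have "w \<in> V" unfolding is_leaf_def by simp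
  then obtain \<rho> where \<rho>: "down_path V r par \<rho>" "hd \<rho> = r" "last \<rho> = w"
    "set \<rho> = {x. ancestor V r par x w}"
    using root_path by blast
  have "root_leaf_path V r par \<rho>" unfolding root_leaf_path_def using \<rho> w(1) by simp
  moreover have "u \<in> set \<rho>" "v \<in> set \<rho>" using \<rho>(4) w(2) ancestor_trans[OF w(2) assms] by auto
  ultimately show ?thesis by (rule that)
qed

lemma independent_not_ancestor:
  assumes "independent V r par p q" "u \<in> set p" "v \<in> set q"
  shows "\<not> ancestor V r par u v" "\<not> ancestor V r par v u"
proof -
  have "\<not> ancestor V r par a b" if "{a, b} \<inter> set p \<noteq> {}" "{a, b} \<inter> set q \<noteq> {}" for a b
  proof
    assume "ancestor V r par a b"
    then obtain \<rho> where "root_leaf_path V r par \<rho>" "a \<in> set \<rho>" "b \<in> set \<rho>"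
      by (rule root_leaf_path_through)
    then show False using assms(1) that unfolding independent_def by blast
  qed
  then show "\<not> ancestor V r par u v" "\<not> ancestor V r par v u" using assms(2,3) by blast+
qed

lemma down_path_depth:
  "down_path V r par p \<Longrightarrow> i < length p \<Longrightarrow> depth r par (p ! i) = depth r par (hd p) + i"
proof (induction i)
  case 0
  then show ?case by (simp add: down_path_def hd_conv_nth)
next
  case (Suc i)
  have "p ! Suc i \<noteq> r" "par (p ! Suc i) = p ! i" using down_path_step[OF Suc.prems] by auto
  then show ?case
    using depth_par[OF down_path_nth_in_V[OF Suc.prems]] Suc by simp
qed

lemma tdist_down_path_le:
  assumes "down_path V r par p" "i \<le> j" "j < length p"
  shows "tdist V r par (p ! j) (p ! i) = j - i"
  using assms(2,3)
proof (induction j)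
  case 0
  then show ?case using tdist_self[OF down_path_nth_in_V[OF assms(1)]] by simp
next
  case (Suc j)
  show ?case
  proof (cases "i = Suc j")
    case True
    then show ?thesis using tdist_self[OF down_path_nth_in_V[OF assms(1) Suc.prems(2)]] by simp
  next
    case False
    have step: "p ! Suc j \<in> V" "p ! Suc j \<noteq> r" "par (p ! Suc j) = p ! j" "p ! i \<in> V"
      using down_path_nth_in_V[OF assms(1)] down_path_step[OF assms(1)] Suc.prems by auto
    have "\<not> ancestor V r par (p ! Suc j) (p ! i)"
    proof
      assume "ancestor V r par (p ! Suc j) (p ! i)"
      then have "p ! Suc j = p ! i \<or> depth r par (p ! Suc j) < depth r par (p ! i)"
        by (rule ancestor_depth_less)
      moreover have "depth r par (p ! i) < depth r par (p ! Suc j)"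
        using down_path_depth[OF assms(1)] Suc.prems False by simp
      ultimately show False by auto
    qed
    then show ?thesis
      using tdist_par[OF step(1,2,4)] step(3) Suc False by simp
  qed
qed

lemma tdist_down_path:
  assumes "down_path V r par p" "i < length p" "j < length p"
  shows "tdist V r par (p ! i) (p ! j) = (if i \<le> j then j - i else i - j)"
  using tdist_down_path_le[OF assms(1)] tdist_commute assms(2,3) by (metis nat_le_linear)

lemma tdist_down_path_outside:
  assumes "down_path V r par p" "y \<in> V" "\<And>z. z \<in> set p \<Longrightarrow> \<not> ancestor V r par z y"
    "i < length p"
  shows "tdist V r par (p ! i) y = i + tdist V r par (hd p) y"
  using assms(4)
proof (induction i)
  case 0
  then show ?case by (simp add: hd_conv_nth)
next
  case (Suc i)
  have "p ! Suc i \<in> V" "p ! Suc i \<noteq> r" "par (p ! Suc i) = p ! i"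
    using down_path_nth_in_V[OF assms(1) Suc.prems] down_path_step[OF assms(1) Suc.prems] by auto
  then show ?case
    using tdist_par[OF _ _ assms(2) assms(3)] Suc by simp
qed

lemma tdist_independent_paths:
  assumes p: "down_path V r par p" "hd p \<noteq> r" "i < length p"
    and q: "down_path V r par q" "hd q \<noteq> r" "j < length q"
    and indep: "independent V r par p q"
  shows "tdist V r par (p ! i) (q ! j) = i + j + 2 + tdist V r par (par (hd p)) (par (hd q))"
proof -
  have hd_p: "hd p \<in> set p" "hd p \<in> V" and hd_q: "hd q \<in> set q" "hd q \<in> V"
    using p q by (auto simp: down_path_def)
  have q_j: "q ! j \<in> set q" "q ! j \<in> V" using q by (auto simp: down_path_def)
  note not_anc = independent_not_ancestor[OF indep]
  have not_anc_par: "\<not> ancestor V r par (hd p) (par (hd q))"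
    using not_anc(1)[OF hd_p(1) hd_q(1)] ancestor.parent[OF _ hd_q(2) q(2)] by blast
  have "tdist V r par (p ! i) (q ! j) = i + tdist V r par (q ! j) (hd p)"
    using tdist_down_path_outside[OF p(1) q_j(2) _ p(3)] not_anc(1) q_j(1) tdist_commute by metis
  also have "tdist V r par (q ! j) (hd p) = j + tdist V r par (hd q) (hd p)"
    using tdist_down_path_outside[OF q(1) hd_p(2) _ q(3)] not_anc(2) hd_p(1) by metis
  also have "tdist V r par (hd q) (hd p) = Suc (tdist V r par (hd p) (par (hd q)))"
    using tdist_par[OF hd_q(2) q(2) hd_p(2)] not_anc(2) hd_p(1) hd_q(1) tdist_commute by metis
  also have "tdist V r par (hd p) (par (hd q)) = Suc (tdist V r par (par (hd p)) (par (hd q)))"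
    using tdist_par[OF hd_p(2) p(2) par_in_V[OF hd_q(2) q(2)] not_anc_par] .
  finally show ?thesis by simp
qed

end

theorem mainTheorem3:
  fixes V :: "'a set" and r :: 'a and par :: "'a \<Rightarrow> 'a"
    and V1 V2 :: "'a set" and P1 P2 :: "'a list set" and f :: "'a list \<Rightarrow> 'a list"
  assumes "rooted_tree V r par"
    and "V1 \<subseteq> V" and "V2 \<subseteq> V" and "V1 \<inter> V2 = {}" and "card V1 = card V2"
    and "induces_paths V r par V1 P1" and "induces_paths V r par V2 P2"
    and "bij_betw f P1 P2"
    and "\<forall>p\<in>P1. length (f p) = length p \<and> siblings V r par (hd p) (hd (f p))"
    and "\<forall>p\<in>P1 \<union> P2. \<forall>q\<in>P1 \<union> P2. p \<noteq> q \<longrightarrow> independent V r par p q"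
  shows "homometric V r par V1 V2"
proof -
  interpret rtree V r par by (rule rtree.intro) (fact assms(1))
  note P1 = induces_pathsD[OF assms(6)] and P2 = induces_pathsD[OF assms(7)]
  have f: "\<And>p. p \<in> P1 \<Longrightarrow> f p \<in> P2" "inj_on f P1"
    using assms(8) by (auto simp: bij_betw_def)
  have shift: "\<And>p. p \<in> P1 \<Longrightarrow>
      length (f p) = length p \<and> hd p \<noteq> r \<and> hd (f p) \<noteq> r \<and> par (hd (f p)) = par (hd p)"
    using assms(9) unfolding siblings_def by auto
  have iso: "tdist V r par (f p ! i) (f p' ! i') = tdist V r par (p ! i) (p' ! i')"
    if "p \<in> P1" "p' \<in> P1" "i < length p" "i' < length p'" for p p' i i'
  proof (cases "p = p'")
    case True
    then show ?thesis using tdist_down_path P1(1) P2(1) f(1) shift that by simp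
  next
    case False
    then have "f p \<noteq> f p'" using f(2) that inj_onD by metis
    then have "independent V r par (f p) (f p')" "independent V r par p p'"
      using assms(10) f(1) that False by auto
    then show ?thesis
      using tdist_independent_paths P1(1) P2(1) f(1) shift that by simp
  qed
  have "profile V r par V2 = profile V r par V1"
    unfolding P1(4)[symmetric] P2(4)[symmetric]
    by (rule profile_eq_if_path_isometry[OF P1(2,3) P2(2,3) assms(8)]) (use shift iso in auto)
  then show ?thesis using assms(4) unfolding homometric_def by simp
qed

end
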